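(* The map $(m,n)\mapsto d_{m,n}$ is a metric on $\overline{\mathbb{N}}=\mathbb{N}\cup\{-1\}$.
   Context: Let $\mathbb{N}=\{0,1,2,\dots\}$. Fix a sequence $(\pi^n)_{n\in\mathbb{N}}$ where each $\pi^n=(\pi^n_i)_{i\in\mathbb{N}}$ is a probability distribution on $\mathbb{N}$ with support contained in $\{0,\dots,n\}$, and $\pi^n\ne\pi^m$ for $m\ne n$. Define reals $d_{m,n}$ for $m,n\in\mathbb{N}\cup\{-1\}$ recursively as follows: $d_{-1,-1}=0$, $d_{-1,j}=d_{j,-1}=1$ for $j\in\mathbb{N}$, and for $m,n\in\mathbb{N}$, $$d_{m,n}=\min_{z\in\mathcal{F}_{m,n}}\sum_{i=0}^m\sum_{j=0}^n z_{i,j}\,d_{i-1,j-1},$$ where $\mathcal{F}_{m,n}$ is the set of transport plans from $\pi^m$ to $\pi^n$, i.e. arrays $z=(z_{i,j})_{0\le i\le m,\,0\le j\le n}$ with $z_{i,j}\ge0$, $\sum_{j=0}^n z_{i,j}=\pi^m_i$ for all $i\le m$, and $\sum_{i=0}^m z_{i,j}=\pi^n_j$ for all $j\le n$. *)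

theory Defs
  imports "HOL-Analysis.Analysis"
begin

text \<open>Distributions p n (= pi^n) are functions nat => real, p n i being the mass of i.
  Transport plans from p m to p n: arrays z indexed by 0..m x 0..n (zero outside).\<close>

definition transport_plans :: "(nat \<Rightarrow> nat \<Rightarrow> real) \<Rightarrow> nat \<Rightarrow> nat \<Rightarrow> (nat \<Rightarrow> nat \<Rightarrow> real) set" where
  "transport_plans p m n =
     {z. (\<forall>i j. z i j \<ge> 0) \<and> (\<forall>i j. (i > m \<or> j > n) \<longrightarrow> z i j = 0)
         \<and> (\<forall>i\<le>m. (\<Sum>j\<le>n. z i j) = p m i) \<and> (\<forall>j\<le>n. (\<Sum>i\<le>m. z i j) = p n j)}"

text \<open>Shifted version: dd p a b = d_{a-1,b-1}. The minimum is rendered as Inf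
  (the set of costs is the image of a nonempty compact polytope, so the minimum exists).\<close>

function dd :: "(nat \<Rightarrow> nat \<Rightarrow> real) \<Rightarrow> nat \<Rightarrow> nat \<Rightarrow> real" where
  "dd p 0 0 = 0"
| "dd p 0 (Suc j) = 1"
| "dd p (Suc i) 0 = 1"
| "dd p (Suc m) (Suc n) =
     Inf ((\<lambda>z. \<Sum>i\<le>m. \<Sum>j\<le>n. z i j * dd p i j) ` transport_plans p m n)"
  by pat_completeness auto
termination
  by (relation "Wellfounded.measure (\<lambda>(p, a, b). a)") auto

text \<open>d on N-bar = {-1,0,1,...}, represented as integers >= -1.\<close>

definition dmet :: "(nat \<Rightarrow> nat \<Rightarrow> real) \<Rightarrow> int \<Rightarrow> int \<Rightarrow> real" where
  "dmet p m n = dd p (nat (m + 1)) (nat (n + 1))"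

end

theory Submission
  imports Defs
begin

(* In the shifted form dd, dd (m+1) (n+1) is the optimal cost of transporting pi^m to pi^n when
   moving i to j costs dd i j: dd is its own Kantorovich lift. Lifting preserves being a metric
   bounded by 1: symmetry by transposing plans, vanishing on the diagonal by the identity plan,
   the triangle inequality by gluing two plans along their common marginal, and definiteness
   because a plan of zero cost lives on the diagonal and so has equal marginals, which the
   distinctness of the pi^n excludes. The bound 1 (plans have total mass 1) handles the triangle
   inequality through the extra point -1. Strong induction on the first index then transfers
   each property from smaller indices to larger ones. *)

definition transport_cost :: "(nat \<Rightarrow> nat \<Rightarrow> real) \<Rightarrow> nat \<Rightarrow> nat \<Rightarrow> (nat \<Rightarrow> nat \<Rightarrow> real) \<Rightarrow> real" where
  "transport_cost D m n z = (\<Sum>i\<le>m. \<Sum>j\<le>n. z i j * D i j)"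

definition kantorovich :: "(nat \<Rightarrow> nat \<Rightarrow> real) \<Rightarrow> (nat \<Rightarrow> nat \<Rightarrow> real) \<Rightarrow> nat \<Rightarrow> nat \<Rightarrow> real" where
  "kantorovich p D m n = Inf (transport_cost D m n ` transport_plans p m n)"

lemma dd_Suc_Suc [simp]: "dd p (Suc m) (Suc n) = kantorovich p (dd p) m n"
  by (simp add: kantorovich_def transport_cost_def)

declare dd.simps(4) [simp del]

lemma dd_0_left: "dd p 0 n = (if n = 0 then 0 else 1)"
  by (cases n) simp_all

lemma dd_0_right: "dd p m 0 = (if m = 0 then 0 else 1)"
  by (cases m) simp_all

lemma transpose_plan_mem: "z \<in> transport_plans p m n \<Longrightarrow> (\<lambda>i j. z j i) \<in> transport_plans p n m"
  by (auto simp: transport_plans_def)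

lemma transport_plans_transpose: "transport_plans p n m = (\<lambda>z i j. z j i) ` transport_plans p m n"
proof
  show "transport_plans p n m \<subseteq> (\<lambda>z i j. z j i) ` transport_plans p m n"
  proof
    fix z assume "z \<in> transport_plans p n m"
    then have "(\<lambda>i j. z j i) \<in> transport_plans p m n" by (rule transpose_plan_mem)
    then show "z \<in> (\<lambda>z i j. z j i) ` transport_plans p m n" by (rule rev_image_eqI) simp
  qed
qed (rule image_subsetI, rule transpose_plan_mem)

lemma transport_cost_transpose:
  "transport_cost D n m (\<lambda>i j. z j i) = transport_cost (\<lambda>i j. D j i) m n z"
  unfolding transport_cost_def by (rule sum.swap)

lemma kantorovich_transpose: "kantorovich p D n m = kantorovich p (\<lambda>i j. D j i) m n"
proof -
  have "transport_cost D n m ` transport_plans p n m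
      = (\<lambda>z. transport_cost D n m (\<lambda>i j. z j i)) ` transport_plans p m n"
    by (subst transport_plans_transpose) (simp add: image_image)
  also have "\<dots> = transport_cost (\<lambda>i j. D j i) m n ` transport_plans p m n"
    by (rule image_cong[OF refl transport_cost_transpose])
  finally show ?thesis by (simp add: kantorovich_def)
qed

lemma kantorovich_cong:
  assumes "\<And>i j. i \<le> m \<Longrightarrow> j \<le> n \<Longrightarrow> D i j = D' i j"
  shows "kantorovich p D m n = kantorovich p D' m n"
proof -
  have "transport_cost D m n = transport_cost D' m n"
    unfolding transport_cost_def by (intro ext sum.cong refl) (simp add: assms)
  then show ?thesis by (simp add: kantorovich_def)
qed

(* Division by zero yields zero, and plans vanish on the null atoms of q, so gluing needs no
   case distinction. *)
definition gluing ::
    "(nat \<Rightarrow> real) \<Rightarrow> (nat \<Rightarrow> nat \<Rightarrow> real) \<Rightarrow> (nat \<Rightarrow> nat \<Rightarrow> real) \<Rightarrow> nat \<Rightarrow> nat \<Rightarrow> nat \<Rightarrow> real" where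
  "gluing q z w i j k = z i j * w j k / q j"

definition compose_plans ::
    "(nat \<Rightarrow> real) \<Rightarrow> nat \<Rightarrow> (nat \<Rightarrow> nat \<Rightarrow> real) \<Rightarrow> (nat \<Rightarrow> nat \<Rightarrow> real) \<Rightarrow> nat \<Rightarrow> nat \<Rightarrow> real" where
  "compose_plans q b z w i k = (\<Sum>j\<le>b. gluing q z w i j k)"

locale distribution_sequence =
  fixes p :: "nat \<Rightarrow> nat \<Rightarrow> real"
  assumes nonneg: "\<And>n i. 0 \<le> p n i"
    and support: "\<And>n i. n < i \<Longrightarrow> p n i = 0"
    and total: "\<And>n. (\<Sum>i\<le>n. p n i) = 1"
begin

lemma plan_nonneg: "z \<in> transport_plans p m n \<Longrightarrow> 0 \<le> z i j"
  by (simp add: transport_plans_def)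

lemma plan_vanishes: "z \<in> transport_plans p m n \<Longrightarrow> m < i \<or> n < j \<Longrightarrow> z i j = 0"
  by (auto simp: transport_plans_def)

lemma plan_row_sum:
  assumes "z \<in> transport_plans p m n"
  shows "(\<Sum>j\<le>n. z i j) = p m i"
proof (cases "i \<le> m")
  case False
  then show ?thesis using plan_vanishes[OF assms] support by simp
qed (use assms in \<open>simp add: transport_plans_def\<close>)

lemma plan_col_sum:
  assumes "z \<in> transport_plans p m n"
  shows "(\<Sum>i\<le>m. z i j) = p n j"
proof (cases "j \<le> n")
  case False
  then show ?thesis using plan_vanishes[OF assms] support by simp
qed (use assms in \<open>simp add: transport_plans_def\<close>)

lemma plan_vanishes_on_null_row:
  assumes z: "z \<in> transport_plans p m n" and "p m i = 0"
  shows "z i j = 0"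
proof (cases "j \<le> n")
  case True
  have "(\<Sum>j\<le>n. z i j) = 0" using plan_row_sum[OF z] assms(2) by simp
  with True show ?thesis by (simp add: sum_nonneg_eq_0_iff plan_nonneg[OF z])
qed (use plan_vanishes[OF z] in simp)

lemma plan_vanishes_on_null_col:
  assumes z: "z \<in> transport_plans p m n" and "p n j = 0"
  shows "z i j = 0"
proof (cases "i \<le> m")
  case True
  have "(\<Sum>i\<le>m. z i j) = 0" using plan_col_sum[OF z] assms(2) by simp
  with True show ?thesis by (simp add: sum_nonneg_eq_0_iff plan_nonneg[OF z])
qed (use plan_vanishes[OF z] in simp)

lemma plan_total_mass: "z \<in> transport_plans p m n \<Longrightarrow> (\<Sum>i\<le>m. \<Sum>j\<le>n. z i j) = 1"
  by (simp add: plan_row_sum total)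

lemma plan_le_1:
  assumes z: "z \<in> transport_plans p m n"
  shows "z i j \<le> 1"
proof (cases "i \<le> m \<and> j \<le> n")
  case True
  have "z i j \<le> (\<Sum>j\<le>n. z i j)"
    using True by (intro member_le_sum) (auto simp: plan_nonneg[OF z])
  also have "\<dots> \<le> (\<Sum>i\<le>m. \<Sum>j\<le>n. z i j)"
    using True by (intro member_le_sum) (auto simp: plan_nonneg[OF z] sum_nonneg)
  finally show ?thesis using plan_total_mass[OF z] by simp
qed (use plan_vanishes[OF z] in auto)

lemma product_plan_mem: "(\<lambda>i j. p m i * p n j) \<in> transport_plans p m n"
  using nonneg support total
  by (auto simp: transport_plans_def sum_distrib_left[symmetric] sum_distrib_right[symmetric])

lemma diagonal_plan_mem: "(\<lambda>i j. if i = j then p m i else 0) \<in> transport_plans p m m"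
  using nonneg support by (auto simp: transport_plans_def if_distrib)

lemma gluing_nonneg:
  assumes z: "z \<in> transport_plans p a b" and w: "w \<in> transport_plans p b c"
  shows "0 \<le> gluing (p b) z w i j k"
  by (simp add: gluing_def plan_nonneg[OF z] plan_nonneg[OF w] nonneg)

lemma gluing_sum_last:
  assumes z: "z \<in> transport_plans p a b" and w: "w \<in> transport_plans p b c"
  shows "(\<Sum>k\<le>c. gluing (p b) z w i j k) = z i j"
proof (cases "p b j = 0")
  case False
  have "(\<Sum>k\<le>c. gluing (p b) z w i j k) = z i j * (\<Sum>k\<le>c. w j k) / p b j"
    by (simp add: gluing_def sum_distrib_left sum_divide_distrib)
  with False show ?thesis by (simp add: plan_row_sum[OF w])
qed (simp add: gluing_def plan_vanishes_on_null_col[OF z])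

lemma gluing_sum_first:
  assumes z: "z \<in> transport_plans p a b" and w: "w \<in> transport_plans p b c"
  shows "(\<Sum>i\<le>a. gluing (p b) z w i j k) = w j k"
proof (cases "p b j = 0")
  case False
  have "(\<Sum>i\<le>a. gluing (p b) z w i j k) = (\<Sum>i\<le>a. z i j) * w j k / p b j"
    by (simp add: gluing_def sum_distrib_right sum_divide_distrib)
  with False show ?thesis by (simp add: plan_col_sum[OF z])
qed (simp add: gluing_def plan_vanishes_on_null_row[OF w])

lemma compose_plans_mem:
  assumes z: "z \<in> transport_plans p a b" and w: "w \<in> transport_plans p b c"
  shows "compose_plans (p b) b z w \<in> transport_plans p a c"
  unfolding transport_plans_def compose_plans_def
proof (intro CollectI conjI allI impI)
  fix i k
  show "0 \<le> (\<Sum>j\<le>b. gluing (p b) z w i j k)"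
    by (intro sum_nonneg gluing_nonneg[OF z w])
  show "a < i \<or> c < k \<Longrightarrow> (\<Sum>j\<le>b. gluing (p b) z w i j k) = 0"
    using plan_vanishes[OF z] plan_vanishes[OF w] by (auto simp: gluing_def)
next
  fix i
  show "(\<Sum>k\<le>c. \<Sum>j\<le>b. gluing (p b) z w i j k) = p a i"
    by (subst sum.swap) (simp add: gluing_sum_last[OF z w] plan_row_sum[OF z])
next
  fix k
  show "(\<Sum>i\<le>a. \<Sum>j\<le>b. gluing (p b) z w i j k) = p c k"
    by (subst sum.swap) (simp add: gluing_sum_first[OF z w] plan_col_sum[OF w])
qed

lemma transport_cost_compose_plans_le:
  assumes z: "z \<in> transport_plans p a b" and w: "w \<in> transport_plans p b c"
    and triangle: "\<And>i j k. i \<le> a \<Longrightarrow> j \<le> b \<Longrightarrow> k \<le> c \<Longrightarrow> D i k \<le> D i j + D j k"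
  shows "transport_cost D a c (compose_plans (p b) b z w)
    \<le> transport_cost D a b z + transport_cost D b c w"
proof -
  define g where "g = gluing (p b) z w"
  have first_leg: "(\<Sum>i\<le>a. \<Sum>k\<le>c. \<Sum>j\<le>b. g i j k * D i j) = transport_cost D a b z"
  proof -
    have "(\<Sum>i\<le>a. \<Sum>k\<le>c. \<Sum>j\<le>b. g i j k * D i j) = (\<Sum>i\<le>a. \<Sum>j\<le>b. (\<Sum>k\<le>c. g i j k) * D i j)"
      by (simp only: sum_distrib_right) (intro sum.cong refl sum.swap)
    then show ?thesis by (simp add: g_def transport_cost_def gluing_sum_last[OF z w])
  qed
  have second_leg: "(\<Sum>i\<le>a. \<Sum>k\<le>c. \<Sum>j\<le>b. g i j k * D j k) = transport_cost D b c w"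
  proof -
    have "(\<Sum>i\<le>a. \<Sum>k\<le>c. \<Sum>j\<le>b. g i j k * D j k) = (\<Sum>i\<le>a. \<Sum>j\<le>b. \<Sum>k\<le>c. g i j k * D j k)"
      by (intro sum.cong refl sum.swap)
    also have "\<dots> = (\<Sum>j\<le>b. \<Sum>i\<le>a. \<Sum>k\<le>c. g i j k * D j k)"
      by (rule sum.swap)
    also have "\<dots> = (\<Sum>j\<le>b. \<Sum>k\<le>c. (\<Sum>i\<le>a. g i j k) * D j k)"
      by (simp only: sum_distrib_right) (intro sum.cong refl sum.swap)
    finally show ?thesis by (simp add: g_def transport_cost_def gluing_sum_first[OF z w])
  qed
  have "transport_cost D a c (compose_plans (p b) b z w) = (\<Sum>i\<le>a. \<Sum>k\<le>c. \<Sum>j\<le>b. g i j k * D i k)"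
    by (simp add: transport_cost_def compose_plans_def g_def sum_distrib_right)
  also have "\<dots> \<le> (\<Sum>i\<le>a. \<Sum>k\<le>c. \<Sum>j\<le>b. g i j k * D i j + g i j k * D j k)"
    unfolding distrib_left[symmetric] g_def
    by (intro sum_mono mult_left_mono triangle gluing_nonneg[OF z w]) auto
  also have "\<dots> = transport_cost D a b z + transport_cost D b c w"
    by (simp add: sum.distrib first_leg second_leg)
  finally show ?thesis .
qed

lemma bdd_below_transport_costs: "bdd_below (transport_cost D m n ` transport_plans p m n)"
proof (rule bdd_belowI2)
  fix z assume z: "z \<in> transport_plans p m n"
  have "- \<bar>D i j\<bar> \<le> z i j * D i j" for i j
  proof -
    have "\<bar>z i j * D i j\<bar> \<le> \<bar>D i j\<bar>"
      unfolding abs_mult using plan_nonneg[OF z] plan_le_1[OF z] by (simp add: mult_left_le_one_le)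
    then show ?thesis by linarith
  qed
  then show "(\<Sum>i\<le>m. \<Sum>j\<le>n. - \<bar>D i j\<bar>) \<le> transport_cost D m n z"
    unfolding transport_cost_def by (intro sum_mono) auto
qed

lemma transport_plans_nonempty: "transport_plans p m n \<noteq> {}"
  using product_plan_mem by blast

lemma kantorovich_le_cost: "z \<in> transport_plans p m n \<Longrightarrow> kantorovich p D m n \<le> transport_cost D m n z"
  unfolding kantorovich_def by (intro cInf_lower imageI bdd_below_transport_costs)

lemma kantorovich_greatest:
  "(\<And>z. z \<in> transport_plans p m n \<Longrightarrow> c \<le> transport_cost D m n z) \<Longrightarrow> c \<le> kantorovich p D m n"
  unfolding kantorovich_def using transport_plans_nonempty by (intro cInf_greatest) auto

lemma kantorovich_lower_bound:
  assumes "\<And>i j. i \<le> m \<Longrightarrow> j \<le> n \<Longrightarrow> c \<le> D i j"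
  shows "c \<le> kantorovich p D m n"
proof (rule kantorovich_greatest)
  fix z assume z: "z \<in> transport_plans p m n"
  have "c = (\<Sum>i\<le>m. \<Sum>j\<le>n. z i j * c)"
    by (simp add: sum_distrib_right[symmetric] plan_total_mass[OF z])
  also have "\<dots> \<le> transport_cost D m n z"
    unfolding transport_cost_def using assms by (intro sum_mono mult_left_mono) (auto simp: plan_nonneg[OF z])
  finally show "c \<le> transport_cost D m n z" .
qed

lemma kantorovich_upper_bound:
  assumes "\<And>i j. i \<le> m \<Longrightarrow> j \<le> n \<Longrightarrow> D i j \<le> c"
  shows "kantorovich p D m n \<le> c"
proof -
  let ?z = "\<lambda>i j. p m i * p n j"
  have "kantorovich p D m n \<le> transport_cost D m n ?z"
    by (rule kantorovich_le_cost[OF product_plan_mem])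
  also have "\<dots> \<le> (\<Sum>i\<le>m. \<Sum>j\<le>n. ?z i j * c)"
    unfolding transport_cost_def using assms by (intro sum_mono mult_left_mono) (auto simp: nonneg)
  also have "\<dots> = c"
    by (simp add: sum_distrib_right[symmetric] plan_total_mass[OF product_plan_mem])
  finally show ?thesis .
qed

lemma kantorovich_self_eq_0:
  assumes "\<And>i j. i \<le> m \<Longrightarrow> j \<le> m \<Longrightarrow> 0 \<le> D i j" and "\<And>i. i \<le> m \<Longrightarrow> D i i = 0"
  shows "kantorovich p D m m = 0"
proof (rule antisym)
  have "kantorovich p D m m \<le> transport_cost D m m (\<lambda>i j. if i = j then p m i else 0)"
    by (rule kantorovich_le_cost[OF diagonal_plan_mem])
  also have "\<dots> = 0"
    unfolding transport_cost_def using assms(2) by (auto intro!: sum.neutral)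
  finally show "kantorovich p D m m \<le> 0" .
qed (rule kantorovich_lower_bound[OF assms(1)])

lemma kantorovich_triangle:
  assumes "\<And>i j k. i \<le> a \<Longrightarrow> j \<le> b \<Longrightarrow> k \<le> c \<Longrightarrow> D i k \<le> D i j + D j k"
  shows "kantorovich p D a c \<le> kantorovich p D a b + kantorovich p D b c"
proof -
  have "kantorovich p D a c - kantorovich p D a b \<le> kantorovich p D b c"
  proof (rule kantorovich_greatest)
    fix w assume w: "w \<in> transport_plans p b c"
    have "kantorovich p D a c - transport_cost D b c w \<le> kantorovich p D a b"
    proof (rule kantorovich_greatest)
      fix z assume z: "z \<in> transport_plans p a b"
      have "kantorovich p D a c \<le> transport_cost D a c (compose_plans (p b) b z w)"
        by (rule kantorovich_le_cost[OF compose_plans_mem[OF z w]])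
      also have "\<dots> \<le> transport_cost D a b z + transport_cost D b c w"
        by (rule transport_cost_compose_plans_le[OF z w assms])
      finally show "kantorovich p D a c - transport_cost D b c w \<le> transport_cost D a b z"
        by simp
    qed
    then show "kantorovich p D a c - kantorovich p D a b \<le> transport_cost D b c w"
      by simp
  qed
  then show ?thesis by simp
qed

lemma plan_row_sum_split_diagonal:
  assumes z: "z \<in> transport_plans p m n"
  shows "p m k = z k k + (\<Sum>j\<le>n. if k = j then 0 else z k j)"
proof -
  have "p m k = (\<Sum>j\<le>n. (if k = j then z k j else 0) + (if k = j then 0 else z k j))"
    unfolding plan_row_sum[OF z, symmetric] by (intro sum.cong) auto
  also have "\<dots> = z k k + (\<Sum>j\<le>n. if k = j then 0 else z k j)"
    using plan_vanishes[OF z, of k k] by (simp add: sum.distrib)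
  finally show ?thesis .
qed

lemma plan_col_sum_split_diagonal:
  assumes z: "z \<in> transport_plans p m n"
  shows "p n k = z k k + (\<Sum>i\<le>m. if i = k then 0 else z i k)"
proof -
  have "p n k = (\<Sum>i\<le>m. (if i = k then z i k else 0) + (if i = k then 0 else z i k))"
    unfolding plan_col_sum[OF z, symmetric] by (intro sum.cong) auto
  also have "\<dots> = z k k + (\<Sum>i\<le>m. if i = k then 0 else z i k)"
    using plan_vanishes[OF z, of k k] by (simp add: sum.distrib)
  finally show ?thesis .
qed

lemma marginal_diff_le_offdiagonal_mass:
  assumes z: "z \<in> transport_plans p m n"
  shows "\<bar>p m k - p n k\<bar> \<le> (\<Sum>i\<le>m. \<Sum>j\<le>n. if i = j then 0 else z i j)"
proof -
  define off where "off = (\<Sum>i\<le>m. \<Sum>j\<le>n. if i = j then 0 else z i j)"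
  define row where "row = (\<Sum>j\<le>n. if k = j then 0 else z k j)"
  define col where "col = (\<Sum>i\<le>m. if i = k then 0 else z i k)"
  have "0 \<le> row" "0 \<le> col" "0 \<le> off"
    unfolding row_def col_def off_def by (auto intro!: sum_nonneg simp: plan_nonneg[OF z])
  moreover have "row \<le> off"
  proof (cases "k \<le> m")
    case True
    then show ?thesis unfolding row_def off_def
      by (intro member_le_sum[where f = "\<lambda>i. \<Sum>j\<le>n. if i = j then 0 else z i j"])
         (auto intro!: sum_nonneg simp: plan_nonneg[OF z])
  next
    case False
    then have "row = 0" unfolding row_def using plan_vanishes[OF z, of k] by (auto intro!: sum.neutral)
    with \<open>0 \<le> off\<close> show ?thesis by simp
  qed
  moreover have "col \<le> off"
  proof (cases "k \<le> n")
    case True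
    have "off = (\<Sum>j\<le>n. \<Sum>i\<le>m. if i = j then 0 else z i j)"
      unfolding off_def by (rule sum.swap)
    with True show ?thesis unfolding col_def
      by (simp only:) (intro member_le_sum[where f = "\<lambda>j. \<Sum>i\<le>m. if i = j then 0 else z i j"],
        auto intro!: sum_nonneg simp: plan_nonneg[OF z])
  next
    case False
    then have "col = 0" unfolding col_def using plan_vanishes[OF z, of _ k] by (auto intro!: sum.neutral)
    with \<open>0 \<le> off\<close> show ?thesis by simp
  qed
  ultimately show ?thesis
    using plan_row_sum_split_diagonal[OF z, of k] plan_col_sum_split_diagonal[OF z, of k]
    unfolding off_def[symmetric] row_def[symmetric] col_def[symmetric] by linarith
qed

lemma kantorovich_eq_0_imp_eq:
  assumes nonneg_D: "\<And>i j. i \<le> m \<Longrightarrow> j \<le> n \<Longrightarrow> 0 \<le> D i j"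
    and pos_D: "\<And>i j. i \<le> m \<Longrightarrow> j \<le> n \<Longrightarrow> i \<noteq> j \<Longrightarrow> 0 < D i j"
    and "kantorovich p D m n = 0"
  shows "p m = p n"
proof
  fix k
  \<comment> \<open>The inserted 1 keeps the set nonempty when \<open>m = n = 0\<close>.\<close>
  define \<delta> where "\<delta> = Min (insert 1 {D i j |i j. i \<le> m \<and> j \<le> n \<and> i \<noteq> j})"
  have finite_offdiagonal: "finite {D i j |i j. i \<le> m \<and> j \<le> n \<and> i \<noteq> j}"
    using finite_image_set2[of "\<lambda>i. i \<le> m" "\<lambda>j. j \<le> n" D] by (auto elim!: finite_subset[rotated])
  have \<delta>_pos: "0 < \<delta>"
    unfolding \<delta>_def using finite_offdiagonal pos_D by auto
  have \<delta>_le: "\<delta> \<le> D i j" if "i \<le> m" "j \<le> n" "i \<noteq> j" for i j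
    unfolding \<delta>_def using finite_offdiagonal that by (auto intro: Min_le)
  have "\<delta> * \<bar>p m k - p n k\<bar> \<le> kantorovich p D m n"
  proof (rule kantorovich_greatest)
    fix z assume z: "z \<in> transport_plans p m n"
    have "\<delta> * \<bar>p m k - p n k\<bar> \<le> \<delta> * (\<Sum>i\<le>m. \<Sum>j\<le>n. if i = j then 0 else z i j)"
      using marginal_diff_le_offdiagonal_mass[OF z] \<delta>_pos by simp
    also have "\<dots> = (\<Sum>i\<le>m. \<Sum>j\<le>n. if i = j then 0 else z i j * \<delta>)"
      by (auto simp: sum_distrib_left intro!: sum.cong)
    also have "\<dots> \<le> transport_cost D m n z"
      unfolding transport_cost_def
      by (intro sum_mono) (auto simp: \<delta>_le nonneg_D plan_nonneg[OF z] mult_left_mono)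
    finally show "\<delta> * \<bar>p m k - p n k\<bar> \<le> transport_cost D m n z" .
  qed
  with \<delta>_pos assms(3) show "p m k = p n k"
    by (simp add: mult_le_0_iff)
qed

lemma dd_nonneg: "0 \<le> dd p m n"
proof (induction m arbitrary: n rule: less_induct)
  case (less m)
  then show ?case
    by (cases m; cases n) (auto intro!: kantorovich_lower_bound)
qed

lemma dd_le_1: "dd p m n \<le> 1"
proof (induction m arbitrary: n rule: less_induct)
  case (less m)
  then show ?case
    by (cases m; cases n) (auto intro!: kantorovich_upper_bound)
qed

lemma dd_commute: "dd p m n = dd p n m"
proof (induction m arbitrary: n rule: less_induct)
  case (less m)
  show ?case
  proof (cases m; cases n)
    fix m' n' assume mn: "m = Suc m'" "n = Suc n'"
    have "kantorovich p (dd p) m' n' = kantorovich p (dd p) n' m'"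
      unfolding kantorovich_transpose[of p "dd p" n']
      by (rule kantorovich_cong) (metis less.IH less_Suc_eq_le mn(1))
    then show ?thesis using mn by simp
  qed simp_all
qed

lemma dd_self_eq_0: "dd p n n = 0"
proof (induction n rule: less_induct)
  case (less n)
  then show ?case
    by (cases n) (auto intro!: kantorovich_self_eq_0 simp: dd_nonneg)
qed

lemma dd_triangle: "dd p x z \<le> dd p x y + dd p y z"
proof (induction x arbitrary: y z rule: less_induct)
  case (less x)
  show ?case
  proof (cases "x = 0 \<or> y = 0 \<or> z = 0")
    case True
    then show ?thesis
      using dd_nonneg[of x y] dd_nonneg[of y z] dd_le_1[of x z] by (auto simp: dd_0_left dd_0_right)
  next
    case False
    then obtain a b c where "x = Suc a" "y = Suc b" "z = Suc c"
      by (metis not0_implies_Suc)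
    then show ?thesis
      using less.IH by (auto intro!: kantorovich_triangle)
  qed
qed

lemma dd_eq_0_iff:
  assumes distinct: "\<And>m n. m \<noteq> n \<Longrightarrow> p m \<noteq> p n"
  shows "dd p m n = 0 \<longleftrightarrow> m = n"
proof (induction m arbitrary: n rule: less_induct)
  case (less m)
  show ?case
  proof (cases m; cases n)
    fix m' n' assume mn: "m = Suc m'" "n = Suc n'"
    show ?thesis
    proof
      assume "dd p m n = 0"
      then have "kantorovich p (dd p) m' n' = 0" using mn by simp
      then have "p m' = p n'"
        using less.IH mn dd_nonneg by (intro kantorovich_eq_0_imp_eq) (auto simp: less_le)
      then show "m = n" using mn distinct by blast
    qed (simp only: dd_self_eq_0)
  qed simp_all
qed

end

theorem theorem2:
  fixes p :: "nat \<Rightarrow> nat \<Rightarrow> real"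
  assumes nonneg: "\<And>n i. p n i \<ge> 0"
    and supp: "\<And>n i. i > n \<Longrightarrow> p n i = 0"
    and total: "\<And>n. (\<Sum>i\<le>n. p n i) = 1"
    and distinct: "\<And>m n. m \<noteq> n \<Longrightarrow> p m \<noteq> p n"
  shows "Metric_space {-1..} (dmet p)"
proof -
  interpret distribution_sequence p
    using nonneg supp total by unfold_locales
  have "nat (x + 1) = nat (y + 1) \<longleftrightarrow> x = y" if "x \<in> {-1..}" "y \<in> {-1..}" for x y :: int
    using that by auto
  then show ?thesis
    by unfold_locales
       (auto simp: dmet_def dd_nonneg dd_eq_0_iff[OF distinct] dd_triangle intro: dd_commute)
qed

end
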